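(* Let $\mathcal P=(Q,T)$ be a replicated system and $U\subseteq T$. Then $[\![\mathrm{disa}(U)]\!]=[\![\mathrm{dead}(U)]\!]$ if and only if $$\bigwedge_{t\in T}\ \bigwedge_{u\in U}\ \bigvee_{u'\in U}\ \mathrm{pre}(t)+(\mathrm{pre}(u)\mathbin{\dot-}\mathrm{post}(t))\ \ge\ \mathrm{pre}(u'),$$ where $(\vec x\mathbin{\dot-}\vec y)(q)=\max(\vec x(q)-\vec y(q),0)$ for $\vec x,\vec y\in\mathbb N^Q$.
   Context: A replicated system of arity $n$ is $\mathcal P=(Q,T)$ with $Q$ finite and $T\subseteq\bigcup_{k=0}^n Q^{(k)}\times Q^{(k)}$ ($Q^{(k)}$: multisets over $Q$ of size $k$) containing all silent transitions $(\vec x,\vec x)$. For $t=(\vec x,\vec y)$: $\mathrm{pre}(t)=\vec x$, $\mathrm{post}(t)=\vec y$, $\Delta(t)=\vec y-\vec x$. Configurations are $C\in\mathbb N^Q$; $t$ is enabled at $C$ if $C\ge\mathrm{pre}(t)$ (componentwise) and then $C\xrightarrow{t}C+\Delta(t)$. A transition is dead at $C$ if it is disabled at every configuration reachable from $C$ (including $C$). $[\![\mathrm{disa}(U)]\!]$ is the set of configurations at which all transitions of $U$ are disabled; $[\![\mathrm{dead}(U)]\!]$ is the set of configurations at which all transitions of $U$ are dead. *)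

theory Defs
  imports Main "HOL-Library.Multiset"
begin

text \<open>Configurations in N^Q are multisets over the finite state type 'q.
  A transition is a pair (pre, post) of multisets.\<close>

type_synonym 'q trans = "'q multiset \<times> 'q multiset"

definition pre :: "'q trans \<Rightarrow> 'q multiset" where "pre t = fst t"
definition post :: "'q trans \<Rightarrow> 'q multiset" where "post t = snd t"

definition replicated_system :: "nat \<Rightarrow> ('q::finite) trans set \<Rightarrow> bool" where
  "replicated_system n T \<longleftrightarrow>
     (\<forall>t\<in>T. size (pre t) = size (post t) \<and> size (pre t) \<le> n) \<and>
     (\<forall>x::'q multiset. size x \<le> n \<longrightarrow> (x, x) \<in> T)"

definition enabled :: "'q trans \<Rightarrow> 'q multiset \<Rightarrow> bool" where
  "enabled t C \<longleftrightarrow> pre t \<subseteq># C"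

definition step :: "'q trans set \<Rightarrow> 'q multiset \<Rightarrow> 'q multiset \<Rightarrow> bool" where
  "step T C D \<longleftrightarrow> (\<exists>t\<in>T. enabled t C \<and> D = C - pre t + post t)"

definition reach :: "'q trans set \<Rightarrow> 'q multiset \<Rightarrow> 'q multiset \<Rightarrow> bool" where
  "reach T = (step T)\<^sup>*\<^sup>*"

definition dead :: "'q trans set \<Rightarrow> 'q trans \<Rightarrow> 'q multiset \<Rightarrow> bool" where
  "dead T t C \<longleftrightarrow> (\<forall>D. reach T C D \<longrightarrow> \<not> enabled t D)"

definition disa_set :: "'q trans set \<Rightarrow> 'q multiset set" where
  "disa_set U = {C. \<forall>u\<in>U. \<not> enabled u C}"

definition dead_set :: "'q trans set \<Rightarrow> 'q trans set \<Rightarrow> 'q multiset set" where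
  "dead_set T U = {C. \<forall>u\<in>U. dead T u C}"

end

theory Submission
  imports Defs
begin

text \<open>Every dead configuration is disabled, and dead configurations stay dead, so the two
  sets coincide exactly when disabling \<open>U\<close> is preserved by every step. After firing an
  enabled transition \<open>t\<close> from \<open>C\<close>, a transition \<open>u\<close> is enabled iff \<open>C\<close>
  contains \<open>pre t + (pre u - post t)\<close>; this multiset is therefore the smallest
  configuration from which \<open>t\<close> enables \<open>u\<close>, and preservation of disabling amounts
  to that multiset already enabling some transition of \<open>U\<close>.\<close>

definition step_closed :: "'q trans set \<Rightarrow> 'q multiset set \<Rightarrow> bool" where
  "step_closed T S \<longleftrightarrow> (\<forall>C D. C \<in> S \<longrightarrow> step T C D \<longrightarrow> D \<in> S)"

lemma step_closed_reach:
  assumes "step_closed T S" "C \<in> S" "reach T C D"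
  shows "D \<in> S"
  using assms(3,2) unfolding reach_def
  by induction (use assms(1) in \<open>auto simp: step_closed_def\<close>)

lemma dead_set_subset_disa_set: "dead_set T U \<subseteq> disa_set U"
  unfolding dead_set_def dead_def disa_set_def reach_def by auto

lemma step_closed_dead_set: "step_closed T (dead_set T U)"
  unfolding step_closed_def dead_set_def dead_def reach_def
  by (auto intro: converse_rtranclp_into_rtranclp)

lemma disa_set_eq_dead_set_iff_step_closed:
  "disa_set U = dead_set T U \<longleftrightarrow> step_closed T (disa_set U)"
proof
  assume "disa_set U = dead_set T U"
  then show "step_closed T (disa_set U)" using step_closed_dead_set by metis
next
  assume closed: "step_closed T (disa_set U)"
  have "disa_set U \<subseteq> dead_set T U"
    using step_closed_reach[OF closed] unfolding dead_set_def dead_def disa_set_def by blast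
  then show "disa_set U = dead_set T U" using dead_set_subset_disa_set by blast
qed

lemma enabled_after_firing_iff:
  assumes "enabled t C"
  shows "enabled u (C - pre t + post t) \<longleftrightarrow> pre t + (pre u - post t) \<subseteq># C"
proof -
  have "enabled u (C - pre t + post t) \<longleftrightarrow> pre u - post t \<subseteq># C - pre t"
    unfolding enabled_def by (simp add: subset_eq_diff_conv)
  also have "\<dots> \<longleftrightarrow> pre t + (pre u - post t) \<subseteq># pre t + (C - pre t)"
    by simp
  also have "pre t + (C - pre t) = C"
    using assms unfolding enabled_def by simp
  finally show ?thesis .
qed

lemma step_closed_disa_set_iff:
  "step_closed T (disa_set U) \<longleftrightarrow>
    (\<forall>t\<in>T. \<forall>u\<in>U. \<exists>u'\<in>U. pre u' \<subseteq># pre t + (pre u - post t))"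
proof
  assume closed: "step_closed T (disa_set U)"
  show "\<forall>t\<in>T. \<forall>u\<in>U. \<exists>u'\<in>U. pre u' \<subseteq># pre t + (pre u - post t)"
  proof (intro ballI, rule ccontr)
    fix t u assume t: "t \<in> T" and u: "u \<in> U"
      and none: "\<not> (\<exists>u'\<in>U. pre u' \<subseteq># pre t + (pre u - post t))"
    define C where "C = pre t + (pre u - post t)"
    have "C \<in> disa_set U" using none unfolding C_def disa_set_def enabled_def by blast
    moreover have en: "enabled t C" unfolding C_def enabled_def by simp
    then have "step T C (C - pre t + post t)" using t unfolding step_def by blast
    ultimately have "C - pre t + post t \<in> disa_set U"
      using closed unfolding step_closed_def by blast
    moreover have "enabled u (C - pre t + post t)"
      using enabled_after_firing_iff[OF en] unfolding C_def by simp
    ultimately show False using u unfolding disa_set_def by blast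
  qed
next
  assume minimal: "\<forall>t\<in>T. \<forall>u\<in>U. \<exists>u'\<in>U. pre u' \<subseteq># pre t + (pre u - post t)"
  show "step_closed T (disa_set U)"
    unfolding step_closed_def
  proof (intro allI impI)
    fix C D assume C: "C \<in> disa_set U" and "step T C D"
    then obtain t where t: "t \<in> T" and en: "enabled t C" and D: "D = C - pre t + post t"
      unfolding step_def by blast
    show "D \<in> disa_set U"
      unfolding disa_set_def
    proof (intro CollectI ballI notI)
      fix u assume u: "u \<in> U" and "enabled u D"
      then have "pre t + (pre u - post t) \<subseteq># C"
        using enabled_after_firing_iff[OF en] D by simp
      moreover obtain u' where "u' \<in> U" and "pre u' \<subseteq># pre t + (pre u - post t)"
        using minimal t u by blast
      ultimately have "enabled u' C"
        unfolding enabled_def using subset_mset.order_trans by blast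
      with C \<open>u' \<in> U\<close> show False
        unfolding disa_set_def by blast
    qed
  qed
qed

theorem proposition11:
  fixes T U :: "('q::finite) trans set" and n :: nat
  assumes "replicated_system n T"
    and "U \<subseteq> T"
  shows "disa_set U = dead_set T U \<longleftrightarrow>
    (\<forall>t\<in>T. \<forall>u\<in>U. \<exists>u'\<in>U. pre u' \<subseteq># pre t + (pre u - post t))"
  using disa_set_eq_dead_set_iff_step_closed step_closed_disa_set_iff by blast

end
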